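(* Let $G_1$ and $G_2$ be connected graphs on disjoint vertex sets, let $v_1\in V(G_1)$, $v_2\in V(G_2)$, and let $G$ be the graph with $V(G)=V(G_1)\cup V(G_2)$ and $E(G)=E(G_1)\cup E(G_2)\cup\{v_1v_2\}$. Then \[ \operatorname{cdim}(G)=\begin{cases}\operatorname{cdim}(G_1)+\operatorname{cdim}(G_2)+1 & \text{if both } G_1 \text{ and } G_2 \text{ force an all-ones representation},\\ \operatorname{cdim}(G_1)+\operatorname{cdim}(G_2) & \text{otherwise.}\end{cases} \]
   Context: All graphs are finite, simple, undirected and nonempty. For distinct vertices $v,w$ of a graph $G$, $\kappa_G(v,w)$ is the maximum number of internally vertex-disjoint $v$–$w$ paths in $G$ (an edge $vw$ counts as one such path); $\kappa_G(v,v)=\infty$. For an ordered vertex set $W=(w_1,\ldots,w_k)$, $r_G(v,W)=[\kappa_G(v,w_1),\ldots,\kappa_G(v,w_k)]$. $W$ is resolving for $G$ if $r_G(v_1,W)=r_G(v_2,W)$ implies $v_1=v_2$. A (connectivity) basis is a resolving set of minimum cardinality, and $\operatorname{cdim}(G)$ is its cardinality. A graph $G$ forces an all-ones representation if for every basis $B$ of $G$ there is a vertex $v\in V(G)$ with $r_G(v,B)=[1,\ldots,1]$ (all entries equal to $1$). In particular the one-vertex graph $K_1$, whose only basis is $\emptyset$ and whose vertex has the empty representation vector (vacuously all ones), forces an all-ones representation. *)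

theory Defs
  imports Main "HOL-Library.Extended_Nat"
begin

definition graph :: "'a set \<Rightarrow> 'a set set \<Rightarrow> bool" where
  "graph V E \<longleftrightarrow> finite V \<and> V \<noteq> {} \<and>
     (\<forall>e\<in>E. \<exists>u v. e = {u, v} \<and> u \<in> V \<and> v \<in> V \<and> u \<noteq> v)"

definition is_path :: "'a set \<Rightarrow> 'a set set \<Rightarrow> 'a \<Rightarrow> 'a \<Rightarrow> 'a list \<Rightarrow> bool" where
  "is_path V E v w p \<longleftrightarrow> length p \<ge> 2 \<and> hd p = v \<and> last p = w \<and> distinct p \<and>
     set p \<subseteq> V \<and> (\<forall>i. Suc i < length p \<longrightarrow> {p ! i, p ! Suc i} \<in> E)"

definition connected_graph :: "'a set \<Rightarrow> 'a set set \<Rightarrow> bool" where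
  "connected_graph V E \<longleftrightarrow> (\<forall>v\<in>V. \<forall>w\<in>V. v \<noteq> w \<longrightarrow> (\<exists>p. is_path V E v w p))"

definition interior :: "'a list \<Rightarrow> 'a set" where
  "interior p = set (butlast (tl p))"

definition disjoint_paths :: "'a set \<Rightarrow> 'a set set \<Rightarrow> 'a \<Rightarrow> 'a \<Rightarrow> 'a list set \<Rightarrow> bool" where
  "disjoint_paths V E v w P \<longleftrightarrow> (\<forall>p\<in>P. is_path V E v w p) \<and>
     (\<forall>p\<in>P. \<forall>q\<in>P. p \<noteq> q \<longrightarrow> interior p \<inter> interior q = {})"

definition kappa :: "'a set \<Rightarrow> 'a set set \<Rightarrow> 'a \<Rightarrow> 'a \<Rightarrow> enat" where
  "kappa V E v w = (if v = w then \<infinity>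
     else enat (Max {card P | P. finite P \<and> disjoint_paths V E v w P}))"

definition rep :: "'a set \<Rightarrow> 'a set set \<Rightarrow> 'a \<Rightarrow> 'a list \<Rightarrow> enat list" where
  "rep V E v W = map (kappa V E v) W"

definition resolving :: "'a set \<Rightarrow> 'a set set \<Rightarrow> 'a list \<Rightarrow> bool" where
  "resolving V E W \<longleftrightarrow> distinct W \<and> set W \<subseteq> V \<and>
     (\<forall>v1\<in>V. \<forall>v2\<in>V. rep V E v1 W = rep V E v2 W \<longrightarrow> v1 = v2)"

definition cdim :: "'a set \<Rightarrow> 'a set set \<Rightarrow> nat" where
  "cdim V E = Min {length W | W. resolving V E W}"

definition is_basis :: "'a set \<Rightarrow> 'a set set \<Rightarrow> 'a list \<Rightarrow> bool" where
  "is_basis V E B \<longleftrightarrow> resolving V E B \<and> length B = cdim V E"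

definition forces_all_ones :: "'a set \<Rightarrow> 'a set set \<Rightarrow> bool" where
  "forces_all_ones V E \<longleftrightarrow>
     (\<forall>B. is_basis V E B \<longrightarrow> (\<exists>v\<in>V. rep V E v B = replicate (length B) 1))"

end

theory Submission
  imports Defs
begin

text \<open>
  The edge v1v2 is a bridge. A path between two vertices of G1 cannot leave G1, since it would
  have to cross the bridge twice; hence connectivities inside G1 (and likewise G2) are those of
  G1 itself. Every path from G1 to G2 crosses the bridge, so two such paths share v1 or v2 as an
  interior vertex unless both are the edge v1v2 itself: connectivities across the bridge are 1.
  Consequently W resolves G iff its parts in G1 and G2 resolve G1 and G2 and there are no two
  vertices x in G1 and y in G2 whose representations with respect to these parts are all ones.
  A basis of G thus splits into resolving sets of the sides, which cannot both be bases if both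
  sides force an all-ones representation; conversely two bases combine to a resolving set of G,
  after adding to the basis of G1 its (unique) all-ones vertex if necessary.
\<close>

definition edges_along :: "'a set set \<Rightarrow> 'a list \<Rightarrow> bool" where
  "edges_along E p \<longleftrightarrow> (\<forall>i. Suc i < length p \<longrightarrow> {p ! i, p ! Suc i} \<in> E)"

lemma edges_along_Nil [simp]: "edges_along E []"
  and edges_along_singleton [simp]: "edges_along E [a]"
  by (simp_all add: edges_along_def)

lemma edges_along_Cons_Cons [simp]:
  "edges_along E (a # b # p) \<longleftrightarrow> {a, b} \<in> E \<and> edges_along E (b # p)"
  unfolding edges_along_def by (auto simp: less_Suc_eq_0_disj)

lemma edges_along_append:
  "edges_along E (xs @ ys) \<longleftrightarrow>
     edges_along E xs \<and> edges_along E ys \<and> (xs \<noteq> [] \<longrightarrow> ys \<noteq> [] \<longrightarrow> {last xs, hd ys} \<in> E)"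
proof (induction xs)
  case (Cons a xs)
  then show ?case by (cases xs; cases ys) auto
qed simp

lemma edges_along_rev: "edges_along E (rev p) \<longleftrightarrow> edges_along E p"
proof (induction p)
  case (Cons a p)
  then show ?case by (cases p) (auto simp: edges_along_append last_rev insert_commute)
qed simp

lemma edges_along_mono: "E \<subseteq> E' \<Longrightarrow> edges_along E p \<Longrightarrow> edges_along E' p"
  unfolding edges_along_def by blast

lemma is_path_iff_edges_along:
  "is_path V E v w p \<longleftrightarrow>
     length p \<ge> 2 \<and> hd p = v \<and> last p = w \<and> distinct p \<and> set p \<subseteq> V \<and> edges_along E p"
  unfolding is_path_def edges_along_def by simp

lemma mem_interior_append: "xs \<noteq> [] \<Longrightarrow> zs \<noteq> [] \<Longrightarrow> y \<in> interior (xs @ y # zs)"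
  by (cases xs) (auto simp: interior_def butlast_append)

lemma graph_edge_vertices: "graph V E \<Longrightarrow> {a, b} \<in> E \<Longrightarrow> a \<in> V \<and> b \<in> V"
  unfolding graph_def by (metis doubleton_eq_iff)

lemma connected_graph_distinct_walk:
  assumes "connected_graph V E" "x \<in> V" "y \<in> V"
  obtains p where "p \<noteq> []" "hd p = x" "last p = y" "distinct p" "set p \<subseteq> V" "edges_along E p"
proof (cases "x = y")
  case True
  then show ?thesis using assms that[of "[x]"] by simp
next
  case False
  then obtain p where "is_path V E x y p" using assms unfolding connected_graph_def by blast
  then have "length p \<ge> 2" "hd p = x" "last p = y" "distinct p" "set p \<subseteq> V" "edges_along E p"
    unfolding is_path_iff_edges_along by auto
  then show ?thesis by (intro that[of p]) auto
qed

lemma kappa_eq_infinity_iff: "kappa V E v w = \<infinity> \<longleftrightarrow> v = w"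
  by (simp add: kappa_def)

lemma kappa_eq_1I:
  assumes "v \<noteq> w" and "is_path V E v w p"
    and meet: "\<And>p q. is_path V E v w p \<Longrightarrow> is_path V E v w q \<Longrightarrow>
                 p = q \<or> interior p \<inter> interior q \<noteq> {}"
  shows "kappa V E v w = 1"
proof -
  let ?S = "{card P | P. finite P \<and> disjoint_paths V E v w P}"
  have le_1: "n \<le> 1" if n: "n \<in> ?S" for n
  proof -
    obtain P where P: "n = card P" "finite P" "disjoint_paths V E v w P" using n by blast
    then have "\<forall>p\<in>P. \<forall>q\<in>P. p = q" using meet unfolding disjoint_paths_def by blast
    then show ?thesis using P card_le_Suc0_iff_eq by auto
  qed
  have "disjoint_paths V E v w {p}" using assms(2) by (simp add: disjoint_paths_def)
  then have "card {p} \<in> ?S" by blast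
  then have "1 \<in> ?S" by simp
  moreover have "finite ?S" using le_1 finite_subset[of ?S "{..1}"] by blast
  ultimately have "Max ?S = 1" using le_1 by (intro Max_eqI) auto
  then show ?thesis using assms(1) by (simp add: kappa_def one_enat_def)
qed

lemma rep_eq_iff: "rep V E a W = rep V E b W \<longleftrightarrow> (\<forall>w\<in>set W. kappa V E a w = kappa V E b w)"
  unfolding rep_def by simp

lemma rep_eq_replicate_1_iff:
  "rep V E a W = replicate (length W) 1 \<longleftrightarrow> (\<forall>w\<in>set W. kappa V E a w = 1)"
  unfolding rep_def by (induction W) auto

lemma rep_eq_imp_eq_if_mem: "x \<in> set W \<Longrightarrow> rep V E x W = rep V E y W \<Longrightarrow> x = y"
  unfolding rep_eq_iff by (metis kappa_eq_infinity_iff)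

lemma rep_neq_replicate_1_if_mem: "x \<in> set W \<Longrightarrow> rep V E x W \<noteq> replicate (length W) 1"
  unfolding rep_eq_replicate_1_iff by (auto simp: kappa_def)

lemma resolving_iff_inj_on:
  "resolving V E W \<longleftrightarrow> distinct W \<and> set W \<subseteq> V \<and> inj_on (\<lambda>v. rep V E v W) V"
  unfolding resolving_def inj_on_def by blast

lemma resolving_length_le_card: "graph V E \<Longrightarrow> resolving V E W \<Longrightarrow> length W \<le> card V"
  unfolding resolving_def graph_def by (metis card_mono distinct_card)

lemma resolving_exists:
  assumes "graph V E" obtains W where "resolving V E W"
proof -
  obtain xs where "set xs = V" "distinct xs"
    using assms finite_distinct_list unfolding graph_def by blast
  then have "resolving V E xs" unfolding resolving_def by (metis order_refl rep_eq_imp_eq_if_mem)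
  then show ?thesis using that by blast
qed

lemma finite_resolving_lengths: "graph V E \<Longrightarrow> finite {length W | W. resolving V E W}"
  by (rule finite_subset[of _ "{..card V}"]) (auto dest: resolving_length_le_card)

lemma cdim_le_length: "graph V E \<Longrightarrow> resolving V E W \<Longrightarrow> cdim V E \<le> length W"
  unfolding cdim_def by (rule Min_le) (auto simp: finite_resolving_lengths)

lemma is_basis_exists:
  assumes "graph V E" obtains B where "is_basis V E B"
proof -
  obtain W where "resolving V E W" using resolving_exists assms by blast
  then have "{length W | W. resolving V E W} \<noteq> {}" by blast
  then have "cdim V E \<in> {length W | W. resolving V E W}"
    unfolding cdim_def by (rule Min_in[OF finite_resolving_lengths[OF assms]])
  then obtain B where "resolving V E B" "length B = cdim V E" by auto
  then show ?thesis using that unfolding is_basis_def by blast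
qed

lemma resolving_append:
  assumes "resolving V E B" "set X \<subseteq> V" "distinct (B @ X)"
  shows "resolving V E (B @ X)"
  unfolding resolving_def
proof (intro conjI ballI impI)
  fix a b assume "a \<in> V" "b \<in> V" "rep V E a (B @ X) = rep V E b (B @ X)"
  then show "a = b" using assms(1) unfolding resolving_def by (simp add: rep_def)
qed (use assms in \<open>auto simp: resolving_def\<close>)

lemma resolving_extension_without_all_ones:
  assumes B: "resolving V E B"
  obtains B' where "resolving V E B'" "length B' \<le> Suc (length B)"
    "\<forall>y\<in>V. rep V E y B' \<noteq> replicate (length B') 1"
proof (cases "\<exists>x\<in>V. rep V E x B = replicate (length B) 1")
  case True
  then obtain x where x: "x \<in> V" "rep V E x B = replicate (length B) 1" by blast
  have "x \<notin> set B" using x(2) rep_neq_replicate_1_if_mem by metis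
  then have res: "resolving V E (B @ [x])"
    using B x(1) resolving_append[of V E B "[x]"] unfolding resolving_def by simp
  have "rep V E y (B @ [x]) \<noteq> replicate (length (B @ [x])) 1" if "y \<in> V" for y
  proof
    assume y: "rep V E y (B @ [x]) = replicate (length (B @ [x])) 1"
    then have "rep V E y B = replicate (length B) 1"
      unfolding rep_eq_replicate_1_iff by simp
    then have "y = x" using B that x unfolding resolving_def by simp
    moreover have "kappa V E y x = 1" using y unfolding rep_eq_replicate_1_iff by simp
    ultimately show False by (simp add: kappa_def)
  qed
  then show ?thesis using that[OF res] by simp
next
  case False
  then show ?thesis using that[OF B] by auto
qed

locale bridged_graphs =
  fixes V1 V2 :: "'a set" and E1 E2 :: "'a set set" and v1 v2 :: 'a
  assumes graph1: "graph V1 E1" and graph2: "graph V2 E2"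
    and connected1: "connected_graph V1 E1" and connected2: "connected_graph V2 E2"
    and disjoint: "V1 \<inter> V2 = {}" and v1_in: "v1 \<in> V1" and v2_in: "v2 \<in> V2"
begin

abbreviation "GV \<equiv> V1 \<union> V2"
\<comment> \<open>simp normal form of the edge set E1 \<union> E2 \<union> {{v1, v2}} of the theorem\<close>
abbreviation "GE \<equiv> insert {v1, v2} (E1 \<union> E2)"

lemma bridged_graphs_swap: "bridged_graphs V2 V1 E2 E1 v2 v1"
  using graph1 graph2 connected1 connected2 disjoint v1_in v2_in
  unfolding bridged_graphs_def by blast

lemma GV_swap: "V2 \<union> V1 = GV"
  and GE_swap: "insert {v2, v1} (E2 \<union> E1) = GE"
  by (auto simp: insert_commute)

lemma graph_join: "graph GV GE"
proof -
  have "v1 \<noteq> v2" using v1_in v2_in disjoint by blast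
  then show ?thesis
    using graph1 graph2 v1_in v2_in unfolding graph_def by (auto 0 4)
qed

lemma edge_between_sides:
  assumes "{a, b} \<in> GE" "a \<in> V1" "b \<in> V2"
  shows "a = v1 \<and> b = v2"
proof -
  have "{a, b} \<notin> E1" "{a, b} \<notin> E2"
    using graph_edge_vertices[OF graph1] graph_edge_vertices[OF graph2] assms(2,3) disjoint by blast+
  then have "{a, b} = {v1, v2}" using assms(1) by blast
  then show ?thesis using assms(2) v2_in disjoint by (auto simp: doubleton_eq_iff)
qed

lemma walk_to_V2_crosses_bridge:
  assumes "edges_along GE p" "set p \<subseteq> GV" "p \<noteq> []" "hd p \<in> V1" "set p \<inter> V2 \<noteq> {}"
  shows "\<exists>xs ys. p = xs @ v1 # v2 # ys"
  using assms
proof (induction p)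
  case (Cons a p)
  then obtain b q where p: "p = b # q" using disjoint by (cases p) auto
  show ?case
  proof (cases "b \<in> V1")
    case True
    then obtain xs ys where "p = xs @ v1 # v2 # ys"
      using Cons disjoint p by auto
    then show ?thesis by (metis append_Cons)
  next
    case False
    then have "a = v1 \<and> b = v2" using Cons p edge_between_sides by auto
    then show ?thesis using p by (metis append_Nil)
  qed
qed simp

lemma path_within_V1:
  assumes p: "is_path GV GE x w p" and "x \<in> V1" "w \<in> V1"
  shows "set p \<subseteq> V1"
proof (rule ccontr)
  assume "\<not> set p \<subseteq> V1"
  moreover have path: "hd p = x" "last p = w" "distinct p" "set p \<subseteq> GV" "edges_along GE p" "p \<noteq> []"
    using p unfolding is_path_iff_edges_along by auto
  ultimately obtain xs ys where split: "p = xs @ v1 # v2 # ys"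
    using walk_to_V2_crosses_bridge assms(2) by blast
  \<comment> \<open>the part after the bridge, traversed backwards, would have to cross it again\<close>
  let ?q = "rev (v2 # ys)"
  have "edges_along GE (v2 # ys)" using path(5) unfolding split edges_along_append by simp
  then have "edges_along GE ?q" unfolding edges_along_rev .
  moreover have "hd ?q \<in> V1" using path(2) assms(3) unfolding hd_rev split by simp
  moreover have "set ?q \<subseteq> GV" using path(4) split by auto
  ultimately obtain xs' ys' where "?q = xs' @ v1 # v2 # ys'"
    using walk_to_V2_crosses_bridge[of ?q] v2_in by auto
  then have "v1 \<in> set (v2 # ys)" by (metis in_set_conv_decomp set_rev)
  then show False using path(3) split by auto
qed

lemma is_path_join_iff_V1:
  assumes "x \<in> V1" "w \<in> V1"
  shows "is_path GV GE x w p \<longleftrightarrow> is_path V1 E1 x w p"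
proof
  assume p: "is_path GV GE x w p"
  then have "set p \<subseteq> V1" using path_within_V1 assms by blast
  moreover have "edges_along E1 p"
    unfolding edges_along_def
  proof (intro allI impI)
    fix i assume i: "Suc i < length p"
    then have in1: "p ! i \<in> V1" "p ! Suc i \<in> V1" using \<open>set p \<subseteq> V1\<close> by (auto dest: nth_mem[of _ p])
    have "{p ! i, p ! Suc i} \<in> GE" using p i unfolding is_path_def by simp
    then show "{p ! i, p ! Suc i} \<in> E1"
      using graph_edge_vertices[OF graph2] in1 disjoint v2_in by (auto simp: doubleton_eq_iff)
  qed
  ultimately show "is_path V1 E1 x w p" using p unfolding is_path_iff_edges_along by auto
next
  assume "is_path V1 E1 x w p"
  then show "is_path GV GE x w p"
    unfolding is_path_iff_edges_along using edges_along_mono[of E1 GE] by auto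
qed

lemma kappa_join_V1:
  assumes "x \<in> V1" "w \<in> V1"
  shows "kappa GV GE x w = kappa V1 E1 x w"
proof -
  have "disjoint_paths GV GE x w P \<longleftrightarrow> disjoint_paths V1 E1 x w P" for P
    unfolding disjoint_paths_def using is_path_join_iff_V1[OF assms] by simp
  then show ?thesis unfolding kappa_def by simp
qed

lemma path_across_exists:
  assumes "x \<in> V1" "w \<in> V2"
  obtains p where "is_path GV GE x w p"
proof -
  obtain p1 where p1: "p1 \<noteq> []" "hd p1 = x" "last p1 = v1" "distinct p1" "set p1 \<subseteq> V1" "edges_along E1 p1"
    using connected_graph_distinct_walk[OF connected1 assms(1) v1_in] by blast
  obtain p2 where p2: "p2 \<noteq> []" "hd p2 = v2" "last p2 = w" "distinct p2" "set p2 \<subseteq> V2" "edges_along E2 p2"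
    using connected_graph_distinct_walk[OF connected2 v2_in assms(2)] by blast
  have "E1 \<subseteq> GE" "E2 \<subseteq> GE" by auto
  then have "edges_along GE p1" "edges_along GE p2"
    using edges_along_mono p1(6) p2(6) by blast+
  then have "edges_along GE (p1 @ p2)" using p1(1,3) p2(1,2) by (simp add: edges_along_append)
  moreover have "distinct (p1 @ p2)" using p1(4,5) p2(4,5) disjoint by auto
  moreover have "length (p1 @ p2) \<ge> 2" using p1(1) p2(1) by (cases p1; cases p2) simp_all
  ultimately have "is_path GV GE x w (p1 @ p2)"
    unfolding is_path_iff_edges_along using p1(1,2,5) p2(1,3,5) by auto
  then show ?thesis using that by blast
qed

lemma path_across_decomp:
  assumes "x \<in> V1" "w \<in> V2" "is_path GV GE x w p"
  obtains xs ys where "p = xs @ v1 # v2 # ys" "xs = [] \<longleftrightarrow> x = v1" "ys = [] \<longleftrightarrow> w = v2"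
proof -
  have path: "hd p = x" "last p = w" "distinct p" "set p \<subseteq> GV" "edges_along GE p" "p \<noteq> []"
    using assms(3) unfolding is_path_iff_edges_along by auto
  have "w \<in> set p" using path(2,6) last_in_set by blast
  then obtain xs ys where split: "p = xs @ v1 # v2 # ys"
    using walk_to_V2_crosses_bridge[OF path(5,4,6)] path(1) assms(1,2) by blast
  have "xs = [] \<longleftrightarrow> x = v1" using path(1,3) split by (cases xs) auto
  moreover have "ys = [] \<longleftrightarrow> w = v2" using path(2,3) split by (cases ys rule: rev_cases) auto
  ultimately show ?thesis using that split by blast
qed

lemma paths_across_meet:
  assumes "x \<in> V1" "w \<in> V2" "is_path GV GE x w p" "is_path GV GE x w q"
  shows "p = q \<or> interior p \<inter> interior q \<noteq> {}"
proof -
  have bridge_inside: "(x \<noteq> v1 \<longrightarrow> v1 \<in> interior r) \<and> (w \<noteq> v2 \<longrightarrow> v2 \<in> interior r) \<and>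
      (x = v1 \<and> w = v2 \<longrightarrow> r = [v1, v2])" if r_path: "is_path GV GE x w r" for r
  proof -
    obtain xs ys where r: "r = xs @ v1 # v2 # ys" "xs = [] \<longleftrightarrow> x = v1" "ys = [] \<longleftrightarrow> w = v2"
      using path_across_decomp[OF assms(1,2) r_path] by blast
    have "r = (xs @ [v1]) @ v2 # ys" using r(1) by simp
    then show ?thesis
      using r mem_interior_append[of xs "v2 # ys" v1] mem_interior_append[of "xs @ [v1]" ys v2]
      by auto
  qed
  show ?thesis
    using bridge_inside[OF assms(3)] bridge_inside[OF assms(4)] by blast
qed

lemma kappa_join_V1_V2:
  assumes "x \<in> V1" "w \<in> V2"
  shows "kappa GV GE x w = 1"
proof -
  obtain p where p: "is_path GV GE x w p" using path_across_exists assms by blast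
  have "x \<noteq> w" using assms disjoint by blast
  then show ?thesis by (rule kappa_eq_1I[OF _ p paths_across_meet[OF assms]])
qed

lemma kappa_join_V2:
  assumes "x \<in> V2" "w \<in> V2"
  shows "kappa GV GE x w = kappa V2 E2 x w"
proof -
  interpret swapped: bridged_graphs V2 V1 E2 E1 v2 v1 by (rule bridged_graphs_swap)
  show ?thesis using swapped.kappa_join_V1[OF assms] unfolding GV_swap GE_swap .
qed

lemma kappa_join_V2_V1:
  assumes "x \<in> V2" "w \<in> V1"
  shows "kappa GV GE x w = 1"
proof -
  interpret swapped: bridged_graphs V2 V1 E2 E1 v2 v1 by (rule bridged_graphs_swap)
  show ?thesis using swapped.kappa_join_V1_V2[OF assms] unfolding GV_swap GE_swap .
qed

lemma rep_join_eq_iff_V1: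
  assumes "a \<in> V1" "b \<in> V1" "set W \<subseteq> GV"
  shows "rep GV GE a W = rep GV GE b W \<longleftrightarrow>
    rep V1 E1 a [w\<leftarrow>W. w \<in> V1] = rep V1 E1 b [w\<leftarrow>W. w \<in> V1]"
  using assms unfolding rep_eq_iff by (auto simp: kappa_join_V1 kappa_join_V1_V2)

lemma rep_join_eq_iff_V2:
  assumes "a \<in> V2" "b \<in> V2" "set W \<subseteq> GV"
  shows "rep GV GE a W = rep GV GE b W \<longleftrightarrow>
    rep V2 E2 a [w\<leftarrow>W. w \<in> V2] = rep V2 E2 b [w\<leftarrow>W. w \<in> V2]"
  using assms unfolding rep_eq_iff by (auto simp: kappa_join_V2 kappa_join_V2_V1)

lemma rep_join_eq_iff_across:
  assumes "a \<in> V1" "b \<in> V2" "set W \<subseteq> GV"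
  shows "rep GV GE a W = rep GV GE b W \<longleftrightarrow>
    rep V1 E1 a [w\<leftarrow>W. w \<in> V1] = replicate (length [w\<leftarrow>W. w \<in> V1]) 1 \<and>
    rep V2 E2 b [w\<leftarrow>W. w \<in> V2] = replicate (length [w\<leftarrow>W. w \<in> V2]) 1"
  using assms unfolding rep_eq_iff rep_eq_replicate_1_iff
  by (auto simp: kappa_join_V1 kappa_join_V2 kappa_join_V1_V2 kappa_join_V2_V1)

lemma resolving_join_iff:
  "resolving GV GE W \<longleftrightarrow> distinct W \<and> set W \<subseteq> GV \<and>
     resolving V1 E1 [w\<leftarrow>W. w \<in> V1] \<and> resolving V2 E2 [w\<leftarrow>W. w \<in> V2] \<and>
     \<not> (\<exists>x\<in>V1. \<exists>y\<in>V2.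
          rep V1 E1 x [w\<leftarrow>W. w \<in> V1] = replicate (length [w\<leftarrow>W. w \<in> V1]) 1 \<and>
          rep V2 E2 y [w\<leftarrow>W. w \<in> V2] = replicate (length [w\<leftarrow>W. w \<in> V2]) 1)"
proof (cases "distinct W \<and> set W \<subseteq> GV")
  case True
  let ?r = "\<lambda>v. rep GV GE v W"
  have "inj_on ?r V1 \<longleftrightarrow> resolving V1 E1 [w\<leftarrow>W. w \<in> V1]"
    using True unfolding resolving_iff_inj_on inj_on_def by (simp add: rep_join_eq_iff_V1 subset_iff)
  moreover have "inj_on ?r V2 \<longleftrightarrow> resolving V2 E2 [w\<leftarrow>W. w \<in> V2]"
    using True unfolding resolving_iff_inj_on inj_on_def by (simp add: rep_join_eq_iff_V2 subset_iff)
  moreover have "(\<forall>x\<in>V1. \<forall>y\<in>V2. ?r x \<noteq> ?r y) \<longleftrightarrow>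
      \<not> (\<exists>x\<in>V1. \<exists>y\<in>V2.
          rep V1 E1 x [w\<leftarrow>W. w \<in> V1] = replicate (length [w\<leftarrow>W. w \<in> V1]) 1 \<and>
          rep V2 E2 y [w\<leftarrow>W. w \<in> V2] = replicate (length [w\<leftarrow>W. w \<in> V2]) 1)"
    using True by (simp add: rep_join_eq_iff_across) blast
  moreover have "inj_on ?r GV \<longleftrightarrow> inj_on ?r V1 \<and> inj_on ?r V2 \<and> (\<forall>x\<in>V1. \<forall>y\<in>V2. ?r x \<noteq> ?r y)"
    using inj_on_Un[of ?r V1 V2] disjoint by (auto simp: Diff_triv Int_commute)
  ultimately show ?thesis using True resolving_iff_inj_on[of GV GE W] by blast
qed (auto simp: resolving_def)

lemma length_filter_sides:
  assumes "set W \<subseteq> GV"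
  shows "length W = length [w\<leftarrow>W. w \<in> V1] + length [w\<leftarrow>W. w \<in> V2]"
proof -
  have "[w\<leftarrow>W. w \<notin> V1] = [w\<leftarrow>W. w \<in> V2]"
    using assms disjoint by (intro filter_cong) auto
  then show ?thesis using sum_length_filter_compl[of "\<lambda>w. w \<in> V1" W] by simp
qed

lemma cdim_join_ge_sum: "cdim V1 E1 + cdim V2 E2 \<le> cdim GV GE"
proof -
  obtain W where W: "is_basis GV GE W" using is_basis_exists graph_join by blast
  then have res: "resolving GV GE W" unfolding is_basis_def by blast
  then have "resolving V1 E1 [w\<leftarrow>W. w \<in> V1]" "resolving V2 E2 [w\<leftarrow>W. w \<in> V2]"
    unfolding resolving_join_iff by auto
  then have "cdim V1 E1 \<le> length [w\<leftarrow>W. w \<in> V1]" "cdim V2 E2 \<le> length [w\<leftarrow>W. w \<in> V2]"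
    using cdim_le_length graph1 graph2 by blast+
  moreover have "length W = length [w\<leftarrow>W. w \<in> V1] + length [w\<leftarrow>W. w \<in> V2]"
    using res length_filter_sides unfolding resolving_def by blast
  ultimately show ?thesis using W unfolding is_basis_def by linarith
qed

lemma cdim_join_gt_sum:
  assumes "forces_all_ones V1 E1" "forces_all_ones V2 E2"
  shows "cdim V1 E1 + cdim V2 E2 < cdim GV GE"
proof (rule ccontr)
  assume not_gt: "\<not> ?thesis"
  obtain W where W: "is_basis GV GE W" using is_basis_exists graph_join by blast
  let ?W1 = "[w\<leftarrow>W. w \<in> V1]" and ?W2 = "[w\<leftarrow>W. w \<in> V2]"
  have res: "resolving V1 E1 ?W1" "resolving V2 E2 ?W2"
    using W resolving_join_iff unfolding is_basis_def by auto
  moreover have "length W = length ?W1 + length ?W2"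
    using W length_filter_sides unfolding is_basis_def resolving_def by blast
  ultimately have "is_basis V1 E1 ?W1" "is_basis V2 E2 ?W2"
    using W not_gt cdim_le_length[OF graph1 res(1)] cdim_le_length[OF graph2 res(2)]
    unfolding is_basis_def by auto
  then obtain x y where "x \<in> V1" "rep V1 E1 x ?W1 = replicate (length ?W1) 1"
    and "y \<in> V2" "rep V2 E2 y ?W2 = replicate (length ?W2) 1"
    using assms unfolding forces_all_ones_def by blast
  then show False using W resolving_join_iff unfolding is_basis_def by blast
qed

lemma resolving_join_append:
  assumes "resolving V1 E1 B1" "resolving V2 E2 B2"
    and "\<not> (\<exists>x\<in>V1. \<exists>y\<in>V2. rep V1 E1 x B1 = replicate (length B1) 1 \<and>
                           rep V2 E2 y B2 = replicate (length B2) 1)"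
  shows "resolving GV GE (B1 @ B2)"
proof -
  have sides: "set B1 \<subseteq> V1" "set B2 \<subseteq> V2" using assms(1,2) unfolding resolving_def by auto
  then have "[w\<leftarrow>B1. w \<in> V1] = B1" "[w\<leftarrow>B2. w \<in> V1] = []"
    "[w\<leftarrow>B1. w \<in> V2] = []" "[w\<leftarrow>B2. w \<in> V2] = B2"
    using disjoint by (auto intro: filter_True filter_False)
  moreover have "distinct (B1 @ B2)"
    using assms(1,2) sides disjoint unfolding resolving_def by auto
  ultimately show ?thesis using assms sides unfolding resolving_join_iff by auto
qed

lemma cdim_join_le_Suc_sum: "cdim GV GE \<le> cdim V1 E1 + cdim V2 E2 + 1"
proof -
  obtain B1 B2 where "is_basis V1 E1 B1" "is_basis V2 E2 B2"
    using is_basis_exists graph1 graph2 by metis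
  moreover obtain B1' where "resolving V1 E1 B1'" "length B1' \<le> Suc (length B1)"
    "\<forall>x\<in>V1. rep V1 E1 x B1' \<noteq> replicate (length B1') 1"
    using calculation(1) resolving_extension_without_all_ones unfolding is_basis_def by blast
  ultimately show ?thesis
    using resolving_join_append[of B1' B2] cdim_le_length[OF graph_join, of "B1' @ B2"]
    unfolding is_basis_def by auto
qed

lemma cdim_join_le_sum:
  assumes "\<not> (forces_all_ones V1 E1 \<and> forces_all_ones V2 E2)"
  shows "cdim GV GE \<le> cdim V1 E1 + cdim V2 E2"
proof -
  obtain B1 B2 where B: "is_basis V1 E1 B1" "is_basis V2 E2 B2"
    "(\<forall>x\<in>V1. rep V1 E1 x B1 \<noteq> replicate (length B1) 1) \<or>
     (\<forall>y\<in>V2. rep V2 E2 y B2 \<noteq> replicate (length B2) 1)"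
    using assms is_basis_exists graph1 graph2 unfolding forces_all_ones_def by metis
  then show ?thesis
    using resolving_join_append[of B1 B2] cdim_le_length[OF graph_join, of "B1 @ B2"]
    unfolding is_basis_def by auto
qed

end

theorem mainTheorem11:
  fixes V1 V2 :: "'a set" and E1 E2 :: "'a set set" and v1 v2 :: 'a
  assumes "graph V1 E1" and "graph V2 E2"
    and "connected_graph V1 E1" and "connected_graph V2 E2"
    and "V1 \<inter> V2 = {}" and "v1 \<in> V1" and "v2 \<in> V2"
  shows "cdim (V1 \<union> V2) (E1 \<union> E2 \<union> {{v1, v2}}) =
    (if forces_all_ones V1 E1 \<and> forces_all_ones V2 E2
     then cdim V1 E1 + cdim V2 E2 + 1
     else cdim V1 E1 + cdim V2 E2)"
proof -
  interpret bridged_graphs V1 V2 E1 E2 v1 v2 using assms by unfold_locales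
  have "E1 \<union> E2 \<union> {{v1, v2}} = GE" by simp
  then show ?thesis
    using cdim_join_ge_sum cdim_join_gt_sum cdim_join_le_Suc_sum cdim_join_le_sum by force
qed

end
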